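(* Let $p>3$ be a prime and let $d\in\mathbb{Z}$. Write $n=(p-1)/2$ and define $$S(d,p)=\det\left[\left(\frac{j^2+dk^2}{p}\right)\right]_{1\le j,k\le n},\qquad T(d,p)=\det\left[\left(\frac{j^2+dk^2}{p}\right)\right]_{0\le j,k\le n}.$$ (i) Let $\bar S(d,p)$ be the determinant obtained from $\det\left[\left(\frac{j^2+dk^2}{p}\right)\right]_{1\le j,k\le n}$ by replacing all the entries in the first row (the row $j=1$) by $1$. If $\left(\frac dp\right)=1$, then $\bar S(d,p)=-S(d,p)$. If $\left(\frac dp\right)=-1$, then $$\bar S(d,p)=\frac{2}{p-1}T(d,p)=\frac{p-1}{2}\det\left[\left(\frac{j^2+dk^2}{p}\right)\right]_{2\le j,k\le n}.$$ (ii) For any integer $m$ with $(p-1)/2<m<p-1$, the determinant $T_m(d,p)=\det\left[(j^2+dk^2)^m\right]_{0\le j,k\le (p-1)/2}$ satisfies $T_m(d,p)\equiv 0\pmod p$.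
   Context: $\left(\frac{\cdot}{p}\right)$ denotes the Legendre symbol modulo $p$ (with $\left(\frac{0}{p}\right)=0$). *)

theory Defs
  imports "HOL-Number_Theory.Number_Theory" "Jordan_Normal_Form.Determinant"
begin

(* Matrix [ (j^2 + d k^2 / p) ]_{a <= j,k <= b}, realised as a (b-a+1)x(b-a+1) matrix
   whose (i,l) entry corresponds to j = a+i, k = a+l. *)
definition legmat :: "int \<Rightarrow> int \<Rightarrow> nat \<Rightarrow> nat \<Rightarrow> int mat" where
  "legmat d p a b = mat (b + 1 - a) (b + 1 - a)
     (\<lambda>(i, l). Legendre ((int (a + i))^2 + d * (int (a + l))^2) p)"

definition S :: "int \<Rightarrow> int \<Rightarrow> int" where
  "S d p = det (legmat d p 1 (nat ((p - 1) div 2)))"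

definition T :: "int \<Rightarrow> int \<Rightarrow> int" where
  "T d p = det (legmat d p 0 (nat ((p - 1) div 2)))"

definition Sbar :: "int \<Rightarrow> int \<Rightarrow> int" where
  "Sbar d p = (let n = nat ((p - 1) div 2) in
     det (mat n n (\<lambda>(i, l). if i = 0 then 1
                              else Legendre ((int (1 + i))^2 + d * (int (1 + l))^2) p)))"

definition Tm :: "nat \<Rightarrow> int \<Rightarrow> int \<Rightarrow> int" where
  "Tm m d p = (let n = nat ((p - 1) div 2) in
     det (mat (n + 1) (n + 1) (\<lambda>(i, l). ((int i)^2 + d * (int l)^2) ^ m)))"

end

theory Submission
  imports Defs
begin

text \<open>Write \<open>p = 2n + 1\<close>. Euler's criterion and the vanishing modulo \<open>p\<close> of the power sums
  \<open>\<Sum>\<^sub>x x\<^sup>k\<close> for \<open>0 < k < p - 1\<close> give, for \<open>a\<close> and \<open>b\<close> prime to \<open>p\<close>, the exact identity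
  \<open>2 \<Sum>\<^sub>k ((a k\<^sup>2 + b)/p) = -((a/p) + (b/p))\<close>, summed over \<open>1 \<le> k \<le> n\<close>. Hence, for \<open>p\<close> prime to \<open>d\<close>, every row
  and every column of the matrix of \<open>S(d,p)\<close> sums to \<open>-(1 + (d/p))/2\<close>. If \<open>(d/p) = 1\<close> these sums
  are \<open>-1\<close>, and adding all rows to the first one turns it into a row of \<open>-1\<close>'s. If \<open>(d/p) = -1\<close>
  they vanish, and adding rows or columns into a single one reduces \<open>S\<^bsub>bar\<^esub>(d,p)\<close> and \<open>T(d,p)\<close>
  to a minor.

  For (ii), Fermat's little theorem reduces the exponents in the binomial expansion of
  \<open>(j\<^sup>2 + d k\<^sup>2)^m\<close> so that, modulo \<open>p\<close>, it becomes a sum of only \<open>n\<close> products \<open>f(j) g(k)\<close>: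
  the \<open>(n+1) \<times> (n+1)\<close> matrix has rank at most \<open>n\<close> over \<open>\<int>/p\<close>.\<close>

lemma det_replace_row_by_sum:
  fixes A :: "'a::comm_ring_1 mat"
  assumes A: "A \<in> carrier_mat n n" and k: "k \<in> L" and L: "L \<subseteq> {..<n}"
  shows "det (mat n n (\<lambda>(i, j). if i = k then \<Sum>l\<in>L. A $$ (l, j) else A $$ (i, j))) = det A"
proof -
  define R where "R F = mat n n (\<lambda>(i, j). if i = k then A $$ (k, j) + (\<Sum>l\<in>F. A $$ (l, j))
                                         else A $$ (i, j))" for F
  have R: "R F \<in> carrier_mat n n" for F by (simp add: R_def)
  have invariant: "det (R F) = det A" if "F \<subseteq> L - {k}" for F
  proof -
    have "F \<subseteq> {..<n}" using that L by blast
    then have "finite F" using finite_subset by blast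
    then show ?thesis using that
    proof (induction F rule: finite_induct)
      case empty
      have "R {} = A" using A by (intro eq_matI) (simp_all add: R_def)
      then show ?case by simp
    next
      case (insert x F)
      have x: "x < n" "k \<noteq> x" using insert.prems L by auto
      have "R (insert x F) = addrow 1 k x (R F)"
        using insert.hyps x by (intro eq_matI) (simp_all add: R_def mat_addrow_def)
      then show ?case using det_addrow[OF x R] insert by simp
    qed
  qed
  have "R (L - {k}) = mat n n (\<lambda>(i, j). if i = k then \<Sum>l\<in>L. A $$ (l, j) else A $$ (i, j))"
    using k finite_subset[OF L] by (intro eq_matI) (simp_all add: R_def sum.remove)
  then show ?thesis using invariant[OF order_refl] by simp
qed

lemma det_replace_col_by_sum:
  fixes A :: "'a::comm_ring_1 mat"
  assumes A: "A \<in> carrier_mat n n" and k: "k \<in> L" and L: "L \<subseteq> {..<n}"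
  shows "det (mat n n (\<lambda>(i, j). if j = k then \<Sum>l\<in>L. A $$ (i, l) else A $$ (i, j))) = det A"
proof -
  define M where "M = mat n n (\<lambda>(i, j). if i = k then \<Sum>l\<in>L. A\<^sup>T $$ (l, j) else A\<^sup>T $$ (i, j))"
  have "l \<in> L \<Longrightarrow> l < n" for l using L by auto
  then have "mat n n (\<lambda>(i, j). if j = k then \<Sum>l\<in>L. A $$ (i, l) else A $$ (i, j)) = M\<^sup>T"
    using A by (auto simp: M_def intro!: eq_matI sum.cong)
  moreover have "det M\<^sup>T = det M" by (rule det_transpose[of _ n]) (simp add: M_def)
  moreover have "det M = det A\<^sup>T"
    unfolding M_def by (rule det_replace_row_by_sum) (use A k L in auto)
  ultimately show ?thesis using det_transpose[OF A] by simp
qed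

lemma det_expand_single_entry_col:
  fixes A :: "'a::comm_ring_1 mat"
  assumes A: "A \<in> carrier_mat n n" and i: "i < n" and j: "j < n"
    and zero: "\<And>i'. i' < n \<Longrightarrow> i' \<noteq> i \<Longrightarrow> A $$ (i', j) = 0"
  shows "det A = A $$ (i, j) * cofactor A i j"
  unfolding laplace_expansion_column[OF A j] using i zero
  by (subst sum.remove[of _ i]) (auto intro!: sum.neutral)

lemma det_expand_single_entry_row:
  fixes A :: "'a::comm_ring_1 mat"
  assumes A: "A \<in> carrier_mat n n" and i: "i < n" and j: "j < n"
    and zero: "\<And>j'. j' < n \<Longrightarrow> j' \<noteq> j \<Longrightarrow> A $$ (i, j') = 0"
  shows "det A = A $$ (i, j) * cofactor A i j"
  unfolding laplace_expansion_row[OF A i] using j zero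
  by (subst sum.remove[of _ j]) (auto intro!: sum.neutral)

lemma det_sum_of_products_eq_0:
  fixes f g :: "nat \<Rightarrow> nat \<Rightarrow> 'a::comm_ring_1"
  assumes "k < n"
  shows "det (mat n n (\<lambda>(i, l). \<Sum>a<k. f a i * g a l)) = 0"
proof -
  define F where "F = mat n n (\<lambda>(i, a). if a < k then f a i else 0)"
  define G where "G = mat n n (\<lambda>(a, l). g a l)"
  have F: "F \<in> carrier_mat n n" and G: "G \<in> carrier_mat n n" by (simp_all add: F_def G_def)
  have "mat n n (\<lambda>(i, l). \<Sum>a<k. f a i * g a l) = F * G"
  proof (rule eq_matI)
    fix i l assume "i < dim_row (F * G)" "l < dim_col (F * G)"
    then have il: "i < n" "l < n" using F G by auto
    have "(F * G) $$ (i, l) = (\<Sum>a\<in>{0..<n}. if a < k then f a i * g a l else 0)"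
      using il by (auto simp: F_def G_def scalar_prod_def intro!: sum.cong)
    also have "\<dots> = (\<Sum>a<k. f a i * g a l)"
    proof -
      have "{0..<n} \<inter> {a. a < k} = {..<k}" using assms by auto
      then show ?thesis by (simp add: sum.If_cases)
    qed
    finally show "mat n n (\<lambda>(i, l). \<Sum>a<k. f a i * g a l) $$ (i, l) = (F * G) $$ (i, l)"
      using il by simp
  qed (use F G in auto)
  moreover have "det F = 0"
    using laplace_expansion_column[OF F assms] assms by (simp add: F_def)
  ultimately show ?thesis using det_mult[OF F G] by simp
qed

lemma cong_det:
  fixes A B :: "int mat"
  assumes A: "A \<in> carrier_mat n n" and B: "B \<in> carrier_mat n n"
    and cong: "\<And>i j. i < n \<Longrightarrow> j < n \<Longrightarrow> [A $$ (i, j) = B $$ (i, j)] (mod p)"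
  shows "[det A = det B] (mod p)"
  unfolding det_def'[OF A] det_def'[OF B]
proof (intro cong_sum cong_mult cong_refl cong_prod)
  fix \<pi> i assume "\<pi> \<in> {\<pi>. \<pi> permutes {0..<n}}" and i: "i \<in> {0..<n}"
  then have "\<pi> i < n" using permutes_in_image by fastforce
  then show "[A $$ (i, \<pi> i) = B $$ (i, \<pi> i)] (mod p)" using cong i by auto
qed

lemma Legendre_cases: "Legendre a p \<in> {-1, 0, 1}"
  unfolding Legendre_def by auto

lemma Legendre_eq_0_iff: "Legendre a p = 0 \<longleftrightarrow> p dvd a"
  unfolding Legendre_def by (auto simp: cong_0_iff)

lemma Legendre_power2_eq_1: "\<not> p dvd a \<Longrightarrow> (Legendre a p)\<^sup>2 = 1"
  using Legendre_cases[of a p] Legendre_eq_0_iff[of a p] by auto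

lemma Legendre_cong:
  assumes "[a = b] (mod p)"
  shows "Legendre a p = Legendre b p"
proof -
  have "[a = 0] (mod p) \<longleftrightarrow> [b = 0] (mod p)" "QuadRes p a \<longleftrightarrow> QuadRes p b"
    unfolding QuadRes_def using assms cong_sym cong_trans by blast+
  then show ?thesis unfolding Legendre_def by simp
qed

lemma Legendre_one: "p > 1 \<Longrightarrow> Legendre 1 p = 1"
  unfolding Legendre_def QuadRes_def by (auto simp: cong_def intro: exI[of _ 1])

context
  fixes p :: int and n :: nat
  assumes prime: "prime p" and p_eq: "p = 2 * int n + 1"
begin

lemma half_pos: "n > 0"
  using prime_ge_2_int[OF prime] p_eq by simp

lemma odd_prime_gt_2: "p > 2"
  using half_pos p_eq by simp

lemma nat_half_eq: "nat ((p - 1) div 2) = n"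
  using p_eq by simp

lemma not_dvd_half_range: "1 \<le> k \<Longrightarrow> k \<le> n \<Longrightarrow> \<not> p dvd int k"
  using zdvd_not_zless[of "int k" p] p_eq by simp

lemma euler_criterion_int: "[Legendre a p = a ^ n] (mod p)"
proof -
  have "prime (nat p)" "2 < nat p" using prime odd_prime_gt_2 by auto
  moreover have "(nat p - 1) div 2 = n" "int (nat p) = p" using p_eq by auto
  ultimately show ?thesis using euler_criterion[of "nat p" a] by simp
qed

lemma cong_Legendre_imp_eq:
  assumes "[Legendre a p = Legendre b p] (mod p)"
  shows "Legendre a p = Legendre b p"
proof (rule ccontr)
  assume ne: "Legendre a p \<noteq> Legendre b p"
  have "p dvd Legendre a p - Legendre b p" using assms by (simp add: cong_iff_dvd_diff)
  then have "p \<le> \<bar>Legendre a p - Legendre b p\<bar>"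
    using dvd_imp_le_int[of "Legendre a p - Legendre b p" p] ne odd_prime_gt_2 by simp
  then show False using Legendre_cases[of a p] Legendre_cases[of b p] odd_prime_gt_2 by auto
qed

lemma fermat_theorem_int: "\<not> p dvd x \<Longrightarrow> [x ^ (2 * n) = 1] (mod p)"
proof -
  assume "\<not> p dvd x"
  have "[(x ^ n)\<^sup>2 = (Legendre x p)\<^sup>2] (mod p)"
    using euler_criterion_int by (intro cong_pow) (simp add: cong_sym)
  then show ?thesis using Legendre_power2_eq_1[OF \<open>\<not> p dvd x\<close>]
    by (simp add: power_mult mult.commute)
qed

lemma Legendre_mult_power2:
  assumes "\<not> p dvd k"
  shows "Legendre (a * k\<^sup>2) p = Legendre a p"
proof (rule cong_Legendre_imp_eq)
  have "[Legendre (a * k\<^sup>2) p = a ^ n * (k ^ n)\<^sup>2] (mod p)"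
    using euler_criterion_int[of "a * k\<^sup>2"]
    by (simp add: power_mult_distrib power_mult[symmetric] mult.commute)
  also have "[a ^ n * (k ^ n)\<^sup>2 = Legendre a p * (Legendre k p)\<^sup>2] (mod p)"
    using euler_criterion_int by (intro cong_mult cong_pow) (simp_all add: cong_sym)
  finally show "[Legendre (a * k\<^sup>2) p = Legendre a p] (mod p)"
    using Legendre_power2_eq_1[OF assms] by simp
qed

lemma Legendre_power2: "\<not> p dvd k \<Longrightarrow> Legendre (k\<^sup>2) p = 1"
  using Legendre_mult_power2[of k 1] Legendre_one odd_prime_gt_2 by simp

text \<open>Multiplication by a primitive root \<open>g\<close> permutes the residues, so the power sum
  \<open>s\<close> satisfies \<open>s \<equiv> g^k s\<close>, while \<open>g^k \<noteq> 1\<close> because the order of \<open>g\<close> is \<open>p - 1\<close>.\<close>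
lemma power_sum_cong_0:
  assumes k: "0 < k" "k < 2 * n"
  shows "[(\<Sum>x\<in>{0..<p}. x ^ k) = 0] (mod p)"
proof -
  have P: "prime (nat p)" "1 < nat p" using prime odd_prime_gt_2 by auto
  obtain g where g: "residue_primroot (nat p) g" using prime_primitive_root_exists[OF P(2,1)] by blast
  have cop: "coprime (nat p) g" and ord: "ord (nat p) g = 2 * n"
    using g P p_eq by (auto simp: residue_primroot_def totient_prime)
  have "\<not> [g ^ k = 1] (mod nat p)"
    using k ord ord_divides[of g k "nat p"] by (auto dest: dvd_imp_le)
  then have "\<not> [int g ^ k = 1] (mod p)"
    using cong_int_iff[of "g ^ k" 1 "nat p"] odd_prime_gt_2 by simp
  then have not_dvd: "\<not> p dvd int g ^ k - 1" by (simp add: cong_iff_dvd_diff)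
  have "p = int (nat p)" using odd_prime_gt_2 by simp
  then have "coprime (int g) p" using cop by (metis coprime_commute coprime_int_iff)
  have inj: "inj_on (\<lambda>x. (int g * x) mod p) {0..<p}"
  proof (rule inj_onI)
    fix x y assume "x \<in> {0..<p}" "y \<in> {0..<p}" "(int g * x) mod p = (int g * y) mod p"
    moreover from this(3) have "[x = y] (mod p)"
      using \<open>coprime (int g) p\<close> cong_mult_lcancel unfolding cong_def by blast
    ultimately show "x = y" by (simp add: cong_def)
  qed
  have "(\<lambda>x. (int g * x) mod p) ` {0..<p} \<subseteq> {0..<p}" using odd_prime_gt_2 by auto
  then have perm: "(\<lambda>x. (int g * x) mod p) ` {0..<p} = {0..<p}"
    using endo_inj_surj[OF _ _ inj] by auto
  define s where "s = (\<Sum>x\<in>{0..<p}. x ^ k)"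
  have "s = (\<Sum>x\<in>(\<lambda>x. (int g * x) mod p) ` {0..<p}. x ^ k)"
    unfolding s_def perm ..
  also have "\<dots> = (\<Sum>x\<in>{0..<p}. ((int g * x) mod p) ^ k)"
    by (simp add: sum.reindex[OF inj])
  also have "[\<dots> = (\<Sum>x\<in>{0..<p}. (int g * x) ^ k)] (mod p)"
    by (intro cong_sum cong_pow) (simp add: cong_def)
  also have "(\<Sum>x\<in>{0..<p}. (int g * x) ^ k) = int g ^ k * s"
    by (simp add: s_def power_mult_distrib sum_distrib_left)
  finally have "[s = int g ^ k * s] (mod p)" .
  then have "p dvd (int g ^ k - 1) * s"
    by (simp add: cong_iff_dvd_diff algebra_simps dvd_diff_commute)
  then have "p dvd s" using not_dvd prime prime_dvd_mult_iff by blast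
  then show ?thesis unfolding s_def by (simp add: cong_0_iff)
qed

lemma even_power_sum_cong:
  assumes "r \<le> n"
  shows "[(\<Sum>x\<in>{0..<p}. x ^ (2 * r)) = (if r = n then -1 else 0)] (mod p)"
proof -
  consider "r = 0" | "0 < r" "r < n" | "r = n" using assms by linarith
  then show ?thesis
  proof cases
    case 1
    then show ?thesis using half_pos odd_prime_gt_2 by (simp add: cong_0_iff)
  next
    case 2
    then show ?thesis using power_sum_cong_0[of "2 * r"] by simp
  next
    case 3
    have "{0..<p} = insert 0 {1..<p}" using odd_prime_gt_2 by auto
    then have "(\<Sum>x\<in>{0..<p}. x ^ (2 * r)) = (\<Sum>x\<in>{1..<p}. x ^ (2 * n))"
      using 3 half_pos by simp
    also have "[\<dots> = (\<Sum>x\<in>{1..<p}. 1)] (mod p)"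
      by (intro cong_sum fermat_theorem_int) (auto simp: zdvd_not_zless)
    also have "(\<Sum>x\<in>{1..<p}. 1) = p - 1" using odd_prime_gt_2 by simp
    also have "[p - 1 = -1] (mod p)" by (simp add: cong_iff_dvd_diff)
    finally show ?thesis using 3 by simp
  qed
qed

text \<open>By Euler's criterion the summand is \<open>(a x\<^sup>2 + b)^n\<close> modulo \<open>p\<close>; expanding binomially,
  only the power sum with exponent \<open>p - 1\<close> survives.\<close>
lemma quadratic_char_sum_cong:
  assumes "\<not> p dvd a"
  shows "[(\<Sum>x\<in>{0..<p}. Legendre (a * x\<^sup>2 + b) p) = - Legendre a p] (mod p)"
proof -
  define c where "c r = of_nat (n choose r) * a ^ r * b ^ (n - r)" for r
  have "[(\<Sum>x\<in>{0..<p}. Legendre (a * x\<^sup>2 + b) p) = (\<Sum>x\<in>{0..<p}. (a * x\<^sup>2 + b) ^ n)] (mod p)"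
    by (intro cong_sum euler_criterion_int)
  also have "(\<Sum>x\<in>{0..<p}. (a * x\<^sup>2 + b) ^ n) = (\<Sum>x\<in>{0..<p}. \<Sum>r\<le>n. c r * x ^ (2 * r))"
    by (simp add: binomial_ring c_def power_mult_distrib mult_ac flip: power_mult)
  also have "\<dots> = (\<Sum>r\<le>n. c r * (\<Sum>x\<in>{0..<p}. x ^ (2 * r)))"
    by (simp add: sum.swap[of _ "{0..<p}"] sum_distrib_left)
  also have "[\<dots> = (\<Sum>r\<le>n. c r * (if r = n then -1 else 0))] (mod p)"
    by (intro cong_sum cong_mult cong_refl even_power_sum_cong) simp
  also have "(\<Sum>r\<le>n. c r * (if r = n then -1 else 0)) = - (a ^ n)"
    by (simp add: c_def if_distrib cong: if_cong)
  also have "[- (a ^ n) = - Legendre a p] (mod p)"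
    using euler_criterion_int[of a] by (simp add: cong_minus_minus_iff cong_sym)
  finally show ?thesis .
qed

lemma sum_residues_symmetric:
  fixes F :: "int \<Rightarrow> int"
  assumes sym: "\<And>x. F (p - x) = F x"
  shows "(\<Sum>x\<in>{0..<p}. F x) = F 0 + 2 * (\<Sum>k\<in>{1..n}. F (int k))"
proof -
  have "{0..<p} = insert 0 ({1..int n} \<union> {int n + 1..<p})" using p_eq by auto
  moreover have "(\<Sum>x\<in>{1..int n} \<union> {int n + 1..<p}. F x)
      = (\<Sum>x\<in>{1..int n}. F x) + (\<Sum>x\<in>{int n + 1..<p}. F x)"
    by (rule sum.union_disjoint) auto
  ultimately have "(\<Sum>x\<in>{0..<p}. F x) = F 0 + ((\<Sum>x\<in>{1..int n}. F x) + (\<Sum>x\<in>{int n + 1..<p}. F x))"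
    by simp
  also have "(\<Sum>x\<in>{int n + 1..<p}. F x) = (\<Sum>x\<in>{1..int n}. F x)"
    by (rule sum.reindex_bij_witness[of _ "\<lambda>x. p - x" "\<lambda>x. p - x"]) (use p_eq sym in auto)
  also have "(\<Sum>x\<in>{1..int n}. F x) = (\<Sum>k\<in>{1..n}. F (int k))"
    using sum.reindex[of int "{1..n}" F] by (simp add: image_int_atLeastAtMost)
  finally show ?thesis by simp
qed

text \<open>The congruence lifts to an equality: \<open>2 H + (a/p) + (b/p)\<close>, with \<open>H\<close> the half sum, is an
  even multiple of \<open>p\<close> of absolute value at most \<open>2n + 2 < 2p\<close>.\<close>
lemma quadratic_char_half_sum:
  assumes a: "\<not> p dvd a" and b: "\<not> p dvd b"
  shows "2 * (\<Sum>k\<in>{1..n}. Legendre (a * (int k)\<^sup>2 + b) p) = - (Legendre a p + Legendre b p)"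
proof -
  define H where "H = (\<Sum>k\<in>{1..n}. Legendre (a * (int k)\<^sup>2 + b) p)"
  have sym: "Legendre (a * (p - x)\<^sup>2 + b) p = Legendre (a * x\<^sup>2 + b) p" for x
    by (rule Legendre_cong) (simp add: cong_iff_dvd_diff power2_eq_square algebra_simps)
  have "[Legendre b p + 2 * H = - Legendre a p] (mod p)"
    using quadratic_char_sum_cong[OF a, of b]
      sum_residues_symmetric[of "\<lambda>x. Legendre (a * x\<^sup>2 + b) p", OF sym]
    by (simp add: H_def)
  then have "p dvd Legendre a p + Legendre b p + 2 * H"
    by (simp add: cong_iff_dvd_diff algebra_simps)
  then obtain t where t: "Legendre a p + Legendre b p + 2 * H = p * t" by blast
  have la: "Legendre a p \<in> {-1, 1}" and lb: "Legendre b p \<in> {-1, 1}"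
    using Legendre_cases Legendre_eq_0_iff a b by blast+
  have "\<bar>H\<bar> \<le> (\<Sum>k\<in>{1..n}. \<bar>Legendre (a * (int k)\<^sup>2 + b) p\<bar>)"
    unfolding H_def by (rule sum_abs)
  also have "\<dots> \<le> (\<Sum>k\<in>{1..n}. 1)"
    by (intro sum_mono) (simp add: Legendre_def)
  finally have "\<bar>H\<bar> \<le> int n" by simp
  then have "\<bar>p * t\<bar> \<le> 2 + 2 * int n" unfolding t[symmetric] using la lb by auto
  then have "p * \<bar>t\<bar> \<le> 2 + 2 * int n" using odd_prime_gt_2 by (simp add: abs_mult)
  then have "p * \<bar>t\<bar> < p * 2" using p_eq half_pos by simp
  then have "\<bar>t\<bar> < 2" using mult_less_cancel_left_pos odd_prime_gt_2 by simp
  moreover have "even (Legendre a p + Legendre b p)" using la lb by auto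
  then have "even (p * t)" by (simp flip: t)
  then have "even t" using p_eq by simp
  ultimately have "t = 0" by (auto elim: evenE)
  then show ?thesis using t by (simp add: H_def)
qed

lemma Legendre_power2_sum: "(\<Sum>j\<in>{1..n}. Legendre ((int j)\<^sup>2) p) = int n"
  using Legendre_power2 not_dvd_half_range by simp

lemma even_power_reduce_cong:
  assumes "0 < e"
  shows "[x ^ (2 * (e + n)) = x ^ (2 * e)] (mod p)"
proof (cases "p dvd x")
  case True
  then have "p dvd x ^ (2 * (e + n))" "p dvd x ^ (2 * e)"
    using assms by (simp_all add: prime prime_dvd_power_iff)
  then show ?thesis by (simp add: cong_def dvd_eq_mod_eq_0)
next
  case False
  have "x ^ (2 * (e + n)) = x ^ (2 * e) * x ^ (2 * n)"
    by (simp add: power_add[symmetric] algebra_simps)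
  also have "[\<dots> = x ^ (2 * e) * 1] (mod p)"
    using fermat_theorem_int[OF False] by (intro cong_mult cong_refl)
  finally show ?thesis by simp
qed

text \<open>Reducing the exponents of \<open>x\<^sup>2\<close> and \<open>y\<^sup>2\<close> modulo \<open>p - 1 = 2 n\<close> (keeping them positive)
  separates \<open>(x\<^sup>2 + d y\<^sup>2)^m\<close> into only \<open>n\<close> products of a function of \<open>x\<close> and one of \<open>y\<close>:
  the terms \<open>x\<^sup>0 y\<^bsup>2m\<^esup>\<close> and \<open>x\<^bsup>2n\<^esup> y\<^bsup>2(m-n)\<^esup>\<close> share the factor \<open>y\<^bsup>2(m-n)\<^esup>\<close>.\<close>
lemma binomial_power_reduced_cong:
  fixes x y d :: int
  assumes m: "n < m" "m < 2 * n" and c: "c = (\<lambda>r. int (m choose r) * d ^ (m - r))"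
  shows "[(x\<^sup>2 + d * y\<^sup>2) ^ m = (c 0 + c n * x ^ (2 * n)) * y ^ (2 * (m - n))
            + (\<Sum>a\<in>{1..<n}. x ^ (2 * a) * (c a * y ^ (2 * (m - a)) + c (a + n) * y ^ (2 * (m - (a + n)))))]
         (mod p)"
proof -
  define t where "t r = c r * x ^ (2 * r) * y ^ (2 * (m - r))" for r
  have "(x\<^sup>2 + d * y\<^sup>2) ^ m = (\<Sum>r\<le>m. t r)"
    by (simp add: binomial_ring t_def c power_mult_distrib mult_ac flip: power_mult)
  also have "\<dots> = (\<Sum>r<2 * n. t r)"
    using m by (intro sum.mono_neutral_left) (auto simp: t_def c)
  also have "\<dots> = (\<Sum>a<n. t a) + (\<Sum>a<n. t (a + n))"
    using sum.shift_bounds_nat_ivl[of t 0 n n] sum.atLeastLessThan_concat[of 0 n "2 * n" t]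
    by (simp add: atLeast0LessThan mult_2)
  also have "\<dots> = t 0 + t n + (\<Sum>a\<in>{1..<n}. t a + t (a + n))"
    using half_pos by (simp add: sum.atLeast_Suc_lessThan atLeast0LessThan[symmetric] sum.distrib)
  also have "[\<dots> = c 0 * y ^ (2 * (m - n)) + t n
                 + (\<Sum>a\<in>{1..<n}. t a + c (a + n) * x ^ (2 * a) * y ^ (2 * (m - (a + n))))] (mod p)"
  proof (intro cong_add cong_refl cong_sum)
    have "y ^ (2 * m) = y ^ (2 * ((m - n) + n))" using m by simp
    then show "[t 0 = c 0 * y ^ (2 * (m - n))] (mod p)"
      using even_power_reduce_cong[of "m - n" y] m by (simp add: t_def cong_mult cong_refl)
    fix a assume "a \<in> {1..<n}"
    then show "[t (a + n) = c (a + n) * x ^ (2 * a) * y ^ (2 * (m - (a + n)))] (mod p)"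
      using even_power_reduce_cong[of a x] by (simp add: t_def cong_mult cong_refl)
  qed
  also have "c 0 * y ^ (2 * (m - n)) + t n
                 + (\<Sum>a\<in>{1..<n}. t a + c (a + n) * x ^ (2 * a) * y ^ (2 * (m - (a + n))))
      = (c 0 + c n * x ^ (2 * n)) * y ^ (2 * (m - n))
            + (\<Sum>a\<in>{1..<n}. x ^ (2 * a) * (c a * y ^ (2 * (m - a)) + c (a + n) * y ^ (2 * (m - (a + n)))))"
    by (simp add: t_def algebra_simps)
  finally show ?thesis .
qed

lemma Tm_cong_0:
  assumes m: "n < m" "m < 2 * n"
  shows "[Tm m d p = 0] (mod p)"
proof -
  define c where "c = (\<lambda>r. int (m choose r) * d ^ (m - r))"
  define f where "f a x = (if a = 0 then c 0 + c n * x ^ (2 * n) else x ^ (2 * a))" for a and x :: int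
  define g where "g a y = (if a = 0 then y ^ (2 * (m - n))
                           else c a * y ^ (2 * (m - a)) + c (a + n) * y ^ (2 * (m - (a + n))))"
    for a and y :: int
  have separated: "[(x\<^sup>2 + d * y\<^sup>2) ^ m = (\<Sum>a<n. f a x * g a y)] (mod p)" for x y
    using binomial_power_reduced_cong[OF m c_def, of x y] half_pos
    by (simp add: f_def g_def sum.atLeast_Suc_lessThan atLeast0LessThan[symmetric])
  have "[Tm m d p = det (mat (n + 1) (n + 1) (\<lambda>(i, l). \<Sum>a<n. f a (int i) * g a (int l)))] (mod p)"
    unfolding Tm_def nat_half_eq Let_def by (rule cong_det) (auto simp: separated)
  also have "det (mat (n + 1) (n + 1) (\<lambda>(i, l). \<Sum>a<n. f a (int i) * g a (int l))) = 0"
    by (rule det_sum_of_products_eq_0) simp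
  finally show ?thesis .
qed

context
  fixes d :: int
  assumes d: "\<not> p dvd d"
begin

lemma Legendre_row_sum:
  assumes "1 \<le> j" "j \<le> n"
  shows "2 * (\<Sum>k\<in>{1..n}. Legendre ((int j)\<^sup>2 + d * (int k)\<^sup>2) p) = - (1 + Legendre d p)"
proof -
  have "\<not> p dvd (int j)\<^sup>2" using not_dvd_half_range[OF assms] prime by (simp add: prime_dvd_power_iff)
  then have "2 * (\<Sum>k\<in>{1..n}. Legendre (d * (int k)\<^sup>2 + (int j)\<^sup>2) p) = - (Legendre d p + 1)"
    using quadratic_char_half_sum[OF d] Legendre_power2[OF not_dvd_half_range[OF assms]] by simp
  then show ?thesis by (simp add: add.commute)
qed

lemma Legendre_col_sum:
  assumes "1 \<le> k" "k \<le> n"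
  shows "2 * (\<Sum>j\<in>{1..n}. Legendre ((int j)\<^sup>2 + d * (int k)\<^sup>2) p) = - (1 + Legendre d p)"
proof -
  have "\<not> p dvd d * (int k)\<^sup>2"
    using not_dvd_half_range[OF assms] d prime by (simp add: prime_dvd_mult_iff prime_dvd_power_iff)
  then show ?thesis
    using quadratic_char_half_sum[of 1 "d * (int k)\<^sup>2"]
      Legendre_mult_power2[OF not_dvd_half_range[OF assms]] Legendre_one odd_prime_gt_2
    by simp
qed

lemma legmat_1_row_sum:
  "i < n \<Longrightarrow> 2 * (\<Sum>l<n. legmat d p 1 n $$ (i, l)) = - (1 + Legendre d p)"
  using Legendre_row_sum[of "Suc i"] by (simp add: legmat_def sum.atLeast1_atMost_eq)

lemma legmat_1_col_sum:
  "l < n \<Longrightarrow> 2 * (\<Sum>i<n. legmat d p 1 n $$ (i, l)) = - (1 + Legendre d p)"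
  using Legendre_col_sum[of "Suc l"] by (simp add: legmat_def sum.atLeast1_atMost_eq)

lemma Sbar_eq_det:
  "Sbar d p = det (mat n n (\<lambda>(i, l). if i = 0 then 1 else legmat d p 1 n $$ (i, l)))"
  unfolding Sbar_def nat_half_eq Let_def legmat_def by (intro arg_cong[where f = det] eq_matI) auto

lemma Sbar_eq_neg_S:
  assumes "Legendre d p = 1"
  shows "Sbar d p = - S d p"
proof -
  let ?A = "legmat d p 1 n"
  let ?B = "mat n n (\<lambda>(i, l). if i = 0 then 1 else ?A $$ (i, l))"
  have A: "?A \<in> carrier_mat n n" by (simp add: legmat_def)
  have "mat n n (\<lambda>(i, j). if i = 0 then \<Sum>l<n. ?A $$ (l, j) else ?A $$ (i, j)) = multrow 0 (-1) ?B"
    using legmat_1_col_sum assms by (intro eq_matI) (auto simp: mat_multrow_def)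
  then have "det ?A = - det ?B"
    using det_replace_row_by_sum[OF A, of 0 "{..<n}"] det_multrow[of 0 n ?B "-1"] half_pos by simp
  then show ?thesis unfolding S_def Sbar_eq_det nat_half_eq by simp
qed

text \<open>For \<open>(d/p) = -1\<close> all rows of the matrix of \<open>S(d,p)\<close> sum to zero, so summing the columns of
  the matrix of \<open>S\<^bsub>bar\<^esub>(d,p)\<close> into the first one leaves only the entry \<open>n\<close> in it.\<close>
lemma Sbar_eq_det_legmat_2:
  assumes "Legendre d p = -1"
  shows "Sbar d p = int n * det (legmat d p 2 n)"
proof -
  define A where "A = legmat d p 1 n"
  let ?B = "mat n n (\<lambda>(i, l). if i = 0 then 1 else A $$ (i, l))"
  let ?B' = "mat n n (\<lambda>(i, j). if j = 0 then \<Sum>l<n. ?B $$ (i, l) else ?B $$ (i, j))"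
  have B: "?B \<in> carrier_mat n n" and B': "?B' \<in> carrier_mat n n" by auto
  have col0: "?B' $$ (i, 0) = (if i = 0 then int n else 0)" if "i < n" for i
    using that half_pos legmat_1_row_sum[OF that] assms by (auto simp: A_def)
  have col0_zero: "?B' $$ (i, 0) = 0" if "i < n" "i \<noteq> 0" for i
    using col0[OF that(1)] by (simp only: that(2) if_False)
  have minor: "mat_delete ?B' 0 0 = legmat d p 2 n"
    by (intro eq_matI) (auto simp: A_def mat_delete_def legmat_def algebra_simps)
  have "det ?B = det ?B'" using det_replace_col_by_sum[OF B, of 0 "{..<n}"] half_pos by simp
  also have "\<dots> = ?B' $$ (0, 0) * cofactor ?B' 0 0"
    using det_expand_single_entry_col[OF B' half_pos half_pos col0_zero] .
  also have "?B' $$ (0, 0) = int n" using col0 half_pos by simp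
  also have "cofactor ?B' 0 0 = det (legmat d p 2 n)" using minor by (simp add: cofactor_def)
  finally show ?thesis unfolding Sbar_eq_det A_def .
qed

text \<open>Here the columns of the rows \<open>j = 1, \<dots>, n\<close> of \<open>T(d,p)\<close> sum to \<open>n, 0, \<dots>, 0\<close>, and the
  remaining minor is \<open>S\<^bsub>bar\<^esub>(d,p)\<close> with its first row negated, since \<open>(d k\<^sup>2/p) = -1\<close>.\<close>
lemma T_eq_Sbar:
  assumes "Legendre d p = -1"
  shows "T d p = int n * Sbar d p"
proof -
  define M where "M = legmat d p 0 n"
  let ?M' = "mat (n + 1) (n + 1) (\<lambda>(i, j). if i = 1 then \<Sum>l\<in>{1..n}. M $$ (l, j) else M $$ (i, j))"
  let ?B = "mat n n (\<lambda>(i, l). if i = 0 then 1 else legmat d p 1 n $$ (i, l))"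
  have M: "M \<in> carrier_mat (n + 1) (n + 1)" and M': "?M' \<in> carrier_mat (n + 1) (n + 1)"
    by (auto simp: M_def legmat_def)
  have row1: "?M' $$ (1, j) = (if j = 0 then int n else 0)" if "j < n + 1" for j
    using that half_pos Legendre_power2_sum Legendre_col_sum[of j] assms by (auto simp: M_def legmat_def)
  have row1_zero: "?M' $$ (1, j) = 0" if "j < n + 1" "j \<noteq> 0" for j
    using row1[OF that(1)] by (simp only: that(2) if_False)
  have first_row: "Legendre (d * (1 + int j)\<^sup>2) p = -1" if "j < n" for j
    using Legendre_mult_power2[OF not_dvd_half_range[of "Suc j"]] that assms by simp
  have "{1..n} \<subseteq> {..<n + 1}" by auto
  then have "det M = det ?M'" using det_replace_row_by_sum[OF M, of 1 "{1..n}"] half_pos by simp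
  also have "\<dots> = ?M' $$ (1, 0) * cofactor ?M' 1 0"
    using det_expand_single_entry_row[OF M' _ _ row1_zero] half_pos by simp
  also have "\<dots> = - int n * det (mat_delete ?M' 1 0)"
    using row1[of 0] by (simp add: cofactor_def)
  also have "mat_delete ?M' 1 0 = multrow 0 (-1) ?B"
    using first_row
    by (intro eq_matI) (auto simp: M_def mat_delete_def legmat_def mat_multrow_def algebra_simps)
  also have "det (multrow 0 (-1) ?B) = - Sbar d p"
    using det_multrow[of 0 n ?B "-1"] half_pos Sbar_eq_det by simp
  finally show ?thesis unfolding T_def nat_half_eq M_def by simp
qed

end

end

theorem theorem1p1:
  fixes p d :: int
  assumes "prime p" and "p > 3"
  shows "(Legendre d p = 1 \<longrightarrow> Sbar d p = - S d p)
     \<and> (Legendre d p = -1 \<longrightarrow>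
          real_of_int (Sbar d p) = 2 / (real_of_int p - 1) * real_of_int (T d p)
        \<and> 2 / (real_of_int p - 1) * real_of_int (T d p)
            = (real_of_int p - 1) / 2 * real_of_int (det (legmat d p 2 (nat ((p - 1) div 2)))))
     \<and> (\<forall>m::nat. (p - 1) div 2 < int m \<and> int m < p - 1 \<longrightarrow> [Tm m d p = 0] (mod p))"
proof -
  define n where "n = nat ((p - 1) div 2)"
  have "odd p" using assms prime_odd_int by auto
  then have p_eq: "p = 2 * int n + 1" using assms by (auto simp: n_def elim!: oddE)
  note prime = \<open>prime p\<close>
  have real_p: "real_of_int p - 1 = 2 * real n" and "n > 0"
    using p_eq half_pos[OF prime p_eq] by simp_all
  show ?thesis unfolding n_def[symmetric]
  proof (intro conjI impI allI)
    assume "Legendre d p = 1"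
    then show "Sbar d p = - S d p"
      using Sbar_eq_neg_S[OF prime p_eq] Legendre_eq_0_iff[of d p] by simp
  next
    assume L: "Legendre d p = -1"
    then have d: "\<not> p dvd d" using Legendre_eq_0_iff[of d p] by simp
    note Sbar = Sbar_eq_det_legmat_2[OF prime p_eq d L] and T = T_eq_Sbar[OF prime p_eq d L]
    show "real_of_int (Sbar d p) = 2 / (real_of_int p - 1) * real_of_int (T d p)"
      using \<open>n > 0\<close> unfolding real_p T by simp
    show "2 / (real_of_int p - 1) * real_of_int (T d p)
        = (real_of_int p - 1) / 2 * real_of_int (det (legmat d p 2 n))"
      using \<open>n > 0\<close> unfolding real_p T Sbar by simp
  next
    fix m :: nat
    assume "(p - 1) div 2 < int m \<and> int m < p - 1"
    then have "n < m" "m < 2 * n" using p_eq by auto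
    then show "[Tm m d p = 0] (mod p)" by (rule Tm_cong_0[OF prime p_eq])
  qed
qed

end
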